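(* In the setting described in the context: (i) For all $\lambda,\mu\in\mathbb{R}^m$ and any point $x_\mu\in\mathbb{R}^n$, setting $\bar d(\mu):=\mathcal{L}_\beta(x_\mu;\mu)$ and $\nabla\bar d(\mu):=Ax_\mu-b$, we have $$d(\lambda)\le\bar d(\mu)+\langle\nabla\bar d(\mu),\lambda-\mu\rangle.$$ (ii) If $\{x^k\}$, $\{\lambda^k\}$ are generated by the IAL framework described in the context, then for every $k\ge1$, $$d(\lambda^{k+1})\ge\mathcal{L}_\beta(x^{k+1};\lambda^k)+\frac\beta2\|Ax^{k+1}-b\|^2-\eta_k.$$
   Context: Let $A\in\mathbb{R}^{m\times n}$ and $b\in\mathbb{R}^m$. Let $f:\mathbb{R}^n\to\mathbb{R}$ be convex and differentiable with Lipschitz continuous gradient. Let $g:\mathbb{R}^n\to\mathbb{R}\cup\{+\infty\}$ be a closed proper convex (possibly nonsmooth) function with bounded domain. Fix a penalty parameter $\beta>0$. For $\lambda\in\mathbb{R}^m$, define $$\hat f_\beta(x;\lambda):=f(x)+\langle\lambda,Ax-b\rangle+\tfrac{\beta}{2}\|Ax-b\|^2,\qquad \mathcal{L}_\beta(x;\lambda):=\hat f_\beta(x;\lambda)+g(x),$$ and $d(\lambda):=\min_{x\in\mathbb{R}^n}\mathcal{L}_\beta(x;\lambda)$. Here $\nabla\hat f_\beta(x;\lambda)$ denotes the gradient of $\hat f_\beta$ with respect to $x$. IAL framework: choose $x^1\in\operatorname{dom} g$, $\lambda^1\in\mathbb{R}^m$, and a nonnegative sequence $\{\eta_k\}$. For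 $k=1,2,\dots$: find a point $x^{k+1}$ such that $$\max_{x\in\mathbb{R}^n}\Big\{\langle\nabla\hat f_\beta(x^{k+1};\lambda^k),\,x^{k+1}-x\rangle+g(x^{k+1})-g(x)\Big\}\le\eta_k,$$ and then set $\lambda^{k+1}=\lambda^k+\beta(Ax^{k+1}-b)$. *)

theory Defs
  imports "HOL-Analysis.Analysis"
begin

text \<open>The extended-valued g : R^n -> R \<union> {+inf} is represented by its effective
  domain D (dom g) together with its (finite) values on D; outside D, g is +inf.\<close>

definition closed_proper_convex_bdd :: "('a::euclidean_space \<Rightarrow> real) \<Rightarrow> 'a set \<Rightarrow> bool" where
  "closed_proper_convex_bdd g D \<longleftrightarrow>
     D \<noteq> {} \<and> convex D \<and> convex_on D g \<and> bounded D \<and>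
     closed {(x, t). x \<in> D \<and> g x \<le> t}"

definition fhat :: "(real^'n \<Rightarrow> real) \<Rightarrow> real^'n^'m \<Rightarrow> real^'m \<Rightarrow> real \<Rightarrow> real^'m \<Rightarrow> real^'n \<Rightarrow> real" where
  "fhat f A b \<beta> lam x = f x + inner lam (A *v x - b) + \<beta> / 2 * (norm (A *v x - b))\<^sup>2"

definition Lag :: "(real^'n \<Rightarrow> real) \<Rightarrow> (real^'n \<Rightarrow> real) \<Rightarrow> real^'n^'m \<Rightarrow> real^'m \<Rightarrow> real \<Rightarrow> real^'m \<Rightarrow> real^'n \<Rightarrow> real" where
  "Lag f g A b \<beta> lam x = fhat f A b \<beta> lam x + g x"

text \<open>d(lam) = min over x of L_beta(x; lam); only x in dom g contribute (elsewhere L = +inf).\<close>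
definition dual :: "(real^'n \<Rightarrow> real) \<Rightarrow> (real^'n \<Rightarrow> real) \<Rightarrow> (real^'n) set \<Rightarrow> real^'n^'m \<Rightarrow> real^'m \<Rightarrow> real \<Rightarrow> real^'m \<Rightarrow> real" where
  "dual f g D A b \<beta> lam = Inf (Lag f g A b \<beta> lam ` D)"

end

theory Submission
  imports Defs
begin

text \<open>Part (i): \<open>L(x; \<lambda>) = L(x; \<mu>) + \<langle>Ax - b, \<lambda> - \<mu>\<rangle>\<close>, and \<open>d(\<lambda>) \<le> L(x; \<lambda>)\<close> because
  the infimum defining \<open>d\<close> is finite: a function with closed epigraph on a bounded domain
  is bounded below. Part (ii): the gradient of \<open>f\<^sub>\<beta>(\<cdot>; \<lambda>\<^sub>k)\<close> at \<open>x\<^sub>k\<^sub>+\<^sub>1\<close> is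
  \<open>\<nabla>f(x\<^sub>k\<^sub>+\<^sub>1) + A\<^sup>T \<lambda>\<^sub>k\<^sub>+\<^sub>1\<close>, so adding the gradient inequality of \<open>f\<close> to the
  inexactness condition at an arbitrary \<open>z\<close> and dropping \<open>\<beta>/2 \<parallel>Az - b\<parallel>\<^sup>2 \<ge> 0\<close> bounds
  \<open>L(z; \<lambda>\<^sub>k\<^sub>+\<^sub>1)\<close> from below uniformly in \<open>z\<close>.\<close>

lemma convex_on_has_derivative_ge:
  fixes f :: "'a::real_normed_vector \<Rightarrow> real"
  assumes convex: "convex_on UNIV f" and deriv: "(f has_derivative f') (at x)"
  shows "f z - f x \<ge> f' (z - x)"
proof -
  define \<phi> where "\<phi> t = f (x + t *\<^sub>R (z - x))" for t :: real
  have "convex_on UNIV \<phi>"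
  proof (rule convex_onI)
    fix u s t :: real assume u: "0 < u" "u < 1"
    have "x + ((1 - u) * s + u * t) *\<^sub>R (z - x)
        = (1 - u) *\<^sub>R (x + s *\<^sub>R (z - x)) + u *\<^sub>R (x + t *\<^sub>R (z - x))"
      by (simp add: algebra_simps)
    then show "\<phi> ((1 - u) *\<^sub>R s + u *\<^sub>R t) \<le> (1 - u) * \<phi> s + u * \<phi> t"
      unfolding \<phi>_def using convex_onD[OF convex, of u "x + s *\<^sub>R (z - x)" "x + t *\<^sub>R (z - x)"] u
      by simp
  qed simp
  moreover have "(\<phi> has_field_derivative f' (z - x)) (at 0)"
  proof -
    have "((\<lambda>t. x + t *\<^sub>R (z - x)) has_derivative (\<lambda>t. t *\<^sub>R (z - x))) (at 0)"
      by (auto intro!: derivative_eq_intros)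
    from has_derivative_compose[OF this] deriv
    have "(\<phi> has_derivative (\<lambda>t. f' (t *\<^sub>R (z - x)))) (at 0)"
      unfolding \<phi>_def by (simp add: o_def)
    moreover have "(\<lambda>t. f' (t *\<^sub>R (z - x))) = (\<lambda>t. f' (z - x) * t)"
      using has_derivative_linear[OF deriv] by (simp add: linear_scale mult.commute)
    ultimately show ?thesis by (simp add: has_field_derivative_def)
  qed
  ultimately have "\<phi> 1 - \<phi> 0 \<ge> f' (z - x) * (1 - 0)"
    by (intro convex_on_imp_above_tangent) auto
  then show ?thesis by (simp add: \<phi>_def)
qed

lemma bdd_below_closed_epigraph:
  fixes g :: "'a::heine_borel \<Rightarrow> real"
  assumes closed: "closed (epigraph D g)" and bounded: "bounded D"
  shows "bdd_below (g ` D)"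
proof (rule ccontr)
  assume unbounded: "\<not> bdd_below (g ` D)"
  define S where "S n = {x \<in> D. g x \<le> - real n}" for n
  have "closed (S n)" for n
  proof -
    have "S n = (\<lambda>x. (x, - real n)) -` epigraph D g"
      by (auto simp: S_def mem_epigraph)
    moreover have "continuous (at x) (\<lambda>x. (x, - real n))" for x :: 'a
      by (intro continuous_intros)
    ultimately show ?thesis
      using closed by (simp add: continuous_closed_vimage)
  qed
  moreover have "S n \<noteq> {}" for n
  proof -
    have "\<not> (\<forall>x\<in>D. - real n \<le> g x)"
      using unbounded by (auto simp: bdd_below_def)
    then obtain x where "x \<in> D" "g x < - real n"
      by (auto simp: not_le)
    then show ?thesis
      by (auto simp: S_def)
  qed
  moreover have "S n \<subseteq> S m" if "m \<le> n" for m n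
    using that by (auto simp: S_def)
  moreover have "bounded (S 0)"
    using bounded by (rule bounded_subset) (auto simp: S_def)
  ultimately obtain a where a: "\<And>n. a \<in> S n"
    by (metis bounded_closed_nest)
  have "real n \<le> - g a" for n
    using a[of n] by (simp add: S_def)
  then show False
    using reals_Archimedean2[of "- g a"] by (meson not_le)
qed

lemma bdd_below_Lag:
  assumes f: "continuous_on UNIV f" and g: "closed_proper_convex_bdd g D"
  shows "bdd_below (Lag f g A b \<beta> \<mu> ` D)"
proof -
  have "epigraph D g = {(x, t). x \<in> D \<and> g x \<le> t}"
    by (auto simp: epigraph_def)
  then have D: "bounded D" and epi: "closed (epigraph D g)"
    using g by (auto simp: closed_proper_convex_bdd_def)
  obtain c where c: "\<And>x. x \<in> D \<Longrightarrow> c \<le> g x"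
    using bdd_below_closed_epigraph[OF epi D] by (auto simp: bdd_below_def)
  have "continuous_on (closure D) (fhat f A b \<beta> \<mu>)"
    unfolding fhat_def
    by (intro continuous_intros continuous_on_subset[OF f]) auto
  then have "bounded (fhat f A b \<beta> \<mu> ` closure D)"
    using D compact_closure by (blast intro: compact_imp_bounded compact_continuous_image)
  then obtain M where M: "\<And>x. x \<in> D \<Longrightarrow> norm (fhat f A b \<beta> \<mu> x) \<le> M"
    using closure_subset by (fastforce simp: bounded_iff)
  have "c - M \<le> Lag f g A b \<beta> \<mu> x" if "x \<in> D" for x
    using c[OF that] M[OF that] by (auto simp: Lag_def)
  then show ?thesis
    by (auto simp: bdd_below_def)
qed

lemma Lag_change_multiplier:
  "Lag f g A b \<beta> \<nu> x = Lag f g A b \<beta> \<mu> x + inner (A *v x - b) (\<nu> - \<mu>)"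
  by (simp add: Lag_def fhat_def inner_diff_right inner_commute)

lemma dual_le_Lag:
  assumes "bdd_below (Lag f g A b \<beta> \<nu> ` D)" and "x \<in> D"
  shows "dual f g D A b \<beta> \<nu> \<le> Lag f g A b \<beta> \<nu> x"
  unfolding dual_def using assms by (intro cInf_lower) auto

lemma has_derivative_fhat:
  assumes "(f has_derivative (\<lambda>h. inner (gradf x) h)) (at x)"
  shows "(fhat f A b \<beta> \<nu> has_derivative
           (\<lambda>h. inner (gradf x) h + inner (\<nu> + \<beta> *\<^sub>R (A *v x - b)) (A *v h))) (at x)"
proof -
  have A: "((*v) A has_derivative (*v) A) (at x)"
    by (simp add: bounded_linear_imp_has_derivative)
  have "(fhat f A b \<beta> \<nu> has_derivative
      (\<lambda>h. inner (gradf x) h + inner \<nu> (A *v h) + \<beta> / 2 * (2 * inner (A *v x - b) (A *v h)))) (at x)"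
    unfolding fhat_def power2_norm_eq_inner
    by (auto intro!: derivative_eq_intros assms A simp: matrix_vector_right_distrib inner_commute)
  moreover have "inner \<nu> (A *v h) + \<beta> / 2 * (2 * inner (A *v x - b) (A *v h))
      = inner (\<nu> + \<beta> *\<^sub>R (A *v x - b)) (A *v h)" for h
    by (simp add: inner_add_left)
  ultimately show ?thesis
    by (simp add: add.assoc)
qed

lemma Lag_multiplier_update_ge:
  fixes G :: "real^'n"
  assumes f_convex: "convex_on UNIV f"
    and f_grad: "(f has_derivative (\<lambda>h. inner (gradf x) h)) (at x)"
    and G: "(fhat f A b \<beta> \<nu> has_derivative (\<lambda>h. inner G h)) (at x)"
    and beta: "\<beta> \<ge> 0"
    and inexact: "inner G (x - z) + g x - g z \<le> \<eta>"
  shows "Lag f g A b \<beta> \<nu> x + \<beta> / 2 * (norm (A *v x - b))\<^sup>2 - \<eta>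
           \<le> Lag f g A b \<beta> (\<nu> + \<beta> *\<^sub>R (A *v x - b)) z"
proof -
  define r where "r = A *v x - b"
  define rz where "rz = A *v z - b"
  define \<nu>' where "\<nu>' = \<nu> + \<beta> *\<^sub>R r"
  have "(\<lambda>h. inner G h) = (\<lambda>h. inner (gradf x) h + inner \<nu>' (A *v h))"
    using has_derivative_unique[OF G has_derivative_fhat[where gradf = gradf, OF f_grad]]
    by (simp add: \<nu>'_def r_def)
  moreover have "A *v (z - x) = rz - r"
    by (simp add: rz_def r_def matrix_vector_mult_diff_distrib)
  ultimately have "inner G (z - x) = inner (gradf x) (z - x) + inner \<nu>' (rz - r)"
    by (metis (no_types))
  moreover have "inner G (x - z) = - inner G (z - x)"
    by (metis inner_minus_right minus_diff_eq)
  moreover have "f z - f x \<ge> inner (gradf x) (z - x)"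
    using convex_on_has_derivative_ge[OF f_convex f_grad] .
  ultimately have "f z + g z \<ge> f x + g x - \<eta> - inner \<nu>' (rz - r)"
    using inexact by linarith
  moreover have "0 \<le> \<beta> / 2 * (norm rz)\<^sup>2"
    using beta by simp
  ultimately have "f x + inner \<nu>' r + g x - \<eta> \<le> f z + inner \<nu>' rz + \<beta> / 2 * (norm rz)\<^sup>2 + g z"
    by (simp add: inner_diff_right)
  moreover have "inner \<nu>' r = inner \<nu> r + \<beta> * (norm r)\<^sup>2"
    by (simp add: \<nu>'_def inner_add_left power2_norm_eq_inner)
  ultimately show ?thesis
    by (simp add: Lag_def fhat_def r_def rz_def \<nu>'_def)
qed

theorem lemma1:
  fixes f g :: "real^'n \<Rightarrow> real" and D :: "(real^'n) set"
    and A :: "real^'n^'m" and b :: "real^'m" and \<beta> :: real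
    and gradf :: "real^'n \<Rightarrow> real^'n"
    and gradfhat :: "real^'n \<Rightarrow> real^'m \<Rightarrow> real^'n"
    and x :: "nat \<Rightarrow> real^'n" and lam :: "nat \<Rightarrow> real^'m" and eta :: "nat \<Rightarrow> real"
  assumes f_convex: "convex_on UNIV f"
    and f_grad: "\<And>z. (f has_derivative (\<lambda>h. inner (gradf z) h)) (at z)"
    and f_lip: "\<exists>L. \<forall>y z. norm (gradf y - gradf z) \<le> L * norm (y - z)"
    and g_cpc: "closed_proper_convex_bdd g D"
    and beta_pos: "\<beta> > 0"
    and fhat_grad: "\<And>z mu. ((\<lambda>y. fhat f A b \<beta> mu y) has_derivative (\<lambda>h. inner (gradfhat z mu) h)) (at z)"
    and x1: "x 1 \<in> D"
    and eta_nonneg: "\<And>k. eta k \<ge> 0"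
    and x_in: "\<And>k. k \<ge> 1 \<Longrightarrow> x (Suc k) \<in> D"
    and x_inexact: "\<And>k. k \<ge> 1 \<Longrightarrow>
        (\<forall>z\<in>D. inner (gradfhat (x (Suc k)) (lam k)) (x (Suc k) - z) + g (x (Suc k)) - g z \<le> eta k)"
    and lam_upd: "\<And>k. k \<ge> 1 \<Longrightarrow> lam (Suc k) = lam k + \<beta> *\<^sub>R (A *v x (Suc k) - b)"
  shows "(\<forall>nu mu xmu. xmu \<in> D \<longrightarrow>
            dual f g D A b \<beta> nu \<le> Lag f g A b \<beta> mu xmu + inner (A *v xmu - b) (nu - mu))
       \<and> (\<forall>k\<ge>1. dual f g D A b \<beta> (lam (Suc k)) \<ge>
            Lag f g A b \<beta> (lam k) (x (Suc k)) + \<beta> / 2 * (norm (A *v x (Suc k) - b))\<^sup>2 - eta k)"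
proof (intro conjI allI impI)
  have "continuous_on UNIV f"
    using has_derivative_continuous[OF f_grad] by (simp add: continuous_at_imp_continuous_on)
  then have bdd: "bdd_below (Lag f g A b \<beta> \<nu> ` D)" for \<nu>
    using g_cpc by (rule bdd_below_Lag)
  fix nu mu xmu
  assume "xmu \<in> D"
  then have "dual f g D A b \<beta> nu \<le> Lag f g A b \<beta> nu xmu"
    by (rule dual_le_Lag[OF bdd])
  also have "\<dots> = Lag f g A b \<beta> mu xmu + inner (A *v xmu - b) (nu - mu)"
    by (rule Lag_change_multiplier)
  finally show "dual f g D A b \<beta> nu \<le> Lag f g A b \<beta> mu xmu + inner (A *v xmu - b) (nu - mu)" .
next
  fix k :: nat
  assume k: "k \<ge> 1"
  have "D \<noteq> {}"
    using g_cpc by (simp add: closed_proper_convex_bdd_def)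
  then show "dual f g D A b \<beta> (lam (Suc k)) \<ge>
      Lag f g A b \<beta> (lam k) (x (Suc k)) + \<beta> / 2 * (norm (A *v x (Suc k) - b))\<^sup>2 - eta k"
    unfolding dual_def lam_upd[OF k]
  proof (rule cINF_greatest)
    fix z
    assume "z \<in> D"
    then show "Lag f g A b \<beta> (lam k) (x (Suc k)) + \<beta> / 2 * (norm (A *v x (Suc k) - b))\<^sup>2 - eta k
        \<le> Lag f g A b \<beta> (lam k + \<beta> *\<^sub>R (A *v x (Suc k) - b)) z"
      using x_inexact[OF k] beta_pos
      by (intro Lag_multiplier_update_ge[OF f_convex f_grad fhat_grad]) simp_all
  qed
qed

end
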